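(* Let $n\ge2$ and let $x=(x(1),\ldots,x(n))$ be a sequence of integers, and $i\in[n]$. (a) If $x'$ is obtained from $x$ by deleting the entry $x(i)$, then $\boldsymbol{b}(x')$ is obtained from $\boldsymbol{b}(x)$ by deleting the entry $\boldsymbol{b}(x)(i)$ or the entry $\boldsymbol{b}(x)(i+1)$ (the latter only when $i<n$). (b) If $x''$ is obtained from $x$ by replacing the entry $x(i)$ with another value, then one of the following holds: (1) $(\boldsymbol{b}(x)(i),\boldsymbol{b}(x)(i+1))=(1,0)$ and $(\boldsymbol{b}(x'')(i),\boldsymbol{b}(x'')(i+1))=(0,1)$, or vice versa, with all other entries equal; (2) $\boldsymbol{b}(x'')$ differs from $\boldsymbol{b}(x)$ in exactly one of the entries $i$, $i+1$; (3) $\boldsymbol{b}(x'')=\boldsymbol{b}(x)$.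
   Context: For an integer sequence $x$ of length $N$, $\boldsymbol{b}(x)\in\{0,1\}^N$ is defined by $\boldsymbol{b}(x)(1)=1$ and, for $2\le i\le N$, $\boldsymbol{b}(x)(i)=1$ if $x(i)>x(i-1)$ and $\boldsymbol{b}(x)(i)=0$ otherwise. Entries with index $N+1$ are disregarded. *)

theory Defs
  imports Main
begin

(* Sequences x = (x(1),...,x(N)) are int lists; the paper's 1-based entry x(k) is x ! (k-1).
   bvec x is the 0/1 list b(x): entry k (1-based) is 1 if k = 1 or x(k) > x(k-1), else 0. *)
definition bvec :: "int list \<Rightarrow> nat list" where
  "bvec x = map (\<lambda>k. if k = 0 then 1 else if x ! k > x ! (k - 1) then 1 else 0) [0..<length x]"

definition ent :: "'a list \<Rightarrow> nat \<Rightarrow> 'a" where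
  "ent l k = l ! (k - 1)"

definition del_ent :: "'a list \<Rightarrow> nat \<Rightarrow> 'a list" where
  "del_ent l k = take (k - 1) l @ drop k l"

end

theory Submission
  imports Defs
begin

(* Deleting x(i) replaces the two comparisons
   x(i-1) < x(i) and x(i) < x(i+1) by the single comparison x(i-1) < x(i+1), which by
   transitivity agrees with one of them; so b(x') is b(x) with entry i or entry i+1 removed.
   Replacing x(i) by v only affects entries i and i+1, and if both change then x(i) was a strict
   peak or valley: by transitivity, a monotone triple x(i-1), x(i), x(i+1) cannot have both of
   its comparisons reversed by moving the middle value. *)

lemma length_bvec [simp]: "length (bvec x) = length x"
  by (simp add: bvec_def)

lemma ent_bvec_1: "x \<noteq> [] \<Longrightarrow> ent (bvec x) 1 = 1"
  by (simp add: bvec_def ent_def flip: length_greater_0_conv)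

lemma ent_bvec_Suc:
  assumes "1 \<le> k" "k < length x"
  shows "ent (bvec x) (Suc k) = (if ent x k < ent x (Suc k) then 1 else 0)"
  using assms by (simp add: bvec_def ent_def)

lemma length_del_ent [simp]:
  "1 \<le> i \<Longrightarrow> i \<le> length l \<Longrightarrow> length (del_ent l i) = length l - 1"
  by (simp add: del_ent_def)

lemma ent_del_ent:
  assumes "1 \<le> i" "1 \<le> k" "k < length l"
  shows "ent (del_ent l i) k = (if k < i then ent l k else ent l (Suc k))"
  using assms by (auto simp: del_ent_def ent_def nth_append min_def)

lemma ent_list_update:
  assumes "p < length l" "1 \<le> k"
  shows "ent (l[p := v]) k = (if k = Suc p then v else ent l k)"
  using assms by (auto simp: ent_def nth_list_update)

lemma list_eq_iff_ent:
  assumes "length l = length l'"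
  shows "l = l' \<longleftrightarrow> (\<forall>k\<in>{1..length l}. ent l k = ent l' k)"
proof
  assume "\<forall>k\<in>{1..length l}. ent l k = ent l' k"
  then have "l ! k = l' ! k" if "k < length l" for k
    using that by (auto simp: ent_def dest: bspec[of _ _ "Suc k"])
  then show "l = l'"
    using assms by (simp add: nth_equalityI)
qed simp

lemma less_skip_middle:
  fixes a b c :: "'a::linorder"
  shows "(a < c \<longleftrightarrow> a < b) \<or> (a < c \<longleftrightarrow> b < c)"
  by auto

lemma less_double_flip:
  fixes a b c v :: "'a::linorder"
  assumes "a < v \<longleftrightarrow> \<not> a < b" and "v < c \<longleftrightarrow> \<not> b < c"
  shows "a < b \<longleftrightarrow> \<not> b < c"
  using assms by auto

lemma ent_bvec_del_ent_other:
  assumes "1 \<le> i" "i \<le> length x" "k \<in> {1..<length x}" "k \<noteq> i"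
  shows "ent (bvec (del_ent x i)) k = ent (del_ent (bvec x) i) k"
proof (cases "k = 1")
  case True
  with assms have "1 < i" "1 < length x" "x \<noteq> []" "del_ent x i \<noteq> []"
    by (auto simp flip: length_greater_0_conv)
  with True show ?thesis
    using ent_bvec_1 ent_del_ent[of i 1 "bvec x"] by simp
next
  case False
  then obtain m where k: "k = Suc m" "1 \<le> m"
    using assms(3) by (cases k) auto
  then show ?thesis
    using assms by (auto simp: ent_bvec_Suc ent_del_ent)
qed

lemma ent_bvec_del_ent_same:
  assumes "1 \<le> i" "i < length x"
  shows "ent (bvec (del_ent x i)) i = ent (bvec x) (i + 1) \<or>
         ent (bvec (del_ent x i)) i = ent (bvec x) i"
proof (cases "i = 1")
  case True
  with assms have "x \<noteq> []" "del_ent x i \<noteq> []"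
    by (auto simp flip: length_greater_0_conv)
  with True show ?thesis
    using ent_bvec_1 by simp
next
  case False
  then obtain m where i: "i = Suc m" "1 \<le> m"
    using assms(1) by (cases i) auto
  with assms show ?thesis
    using less_skip_middle[of "ent x m" "ent x (Suc (Suc m))" "ent x (Suc m)"]
    by (auto simp: ent_bvec_Suc ent_del_ent)
qed

lemma bvec_del_ent:
  assumes "1 \<le> i" "i \<le> length x"
  shows "bvec (del_ent x i) = del_ent (bvec x) i \<or>
         (i < length x \<and> bvec (del_ent x i) = del_ent (bvec x) (i + 1))"
proof (cases "i < length x")
  case False
  then have "bvec (del_ent x i) = del_ent (bvec x) i"
    using assms ent_bvec_del_ent_other by (subst list_eq_iff_ent) auto
  then show ?thesis ..
next
  case True
  have agree: "ent (bvec (del_ent x i)) k = ent (del_ent (bvec x) i) k"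
    if "k \<in> {1..<length x}" "k \<noteq> i" for k
    using ent_bvec_del_ent_other assms that by blast
  from ent_bvec_del_ent_same[OF assms(1) True] show ?thesis
  proof
    assume at_i: "ent (bvec (del_ent x i)) i = ent (bvec x) (i + 1)"
    have "bvec (del_ent x i) = del_ent (bvec x) i"
    proof (subst list_eq_iff_ent, safe)
      fix k assume "k \<in> {1..length (bvec (del_ent x i))}"
      with assms True at_i agree show "ent (bvec (del_ent x i)) k = ent (del_ent (bvec x) i) k"
        by (cases "k = i") (auto simp: ent_del_ent)
    qed (use assms in simp)
    then show ?thesis ..
  next
    assume at_i: "ent (bvec (del_ent x i)) i = ent (bvec x) i"
    have "bvec (del_ent x i) = del_ent (bvec x) (i + 1)"
    proof (subst list_eq_iff_ent, safe)
      fix k assume "k \<in> {1..length (bvec (del_ent x i))}"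
      with assms True at_i agree show "ent (bvec (del_ent x i)) k = ent (del_ent (bvec x) (i + 1)) k"
        by (cases "k = i") (auto simp: ent_del_ent)
    qed (use assms True in simp)
    with True show ?thesis by blast
  qed
qed

lemma ent_bvec_update_other:
  assumes "p < length x" "k \<in> {1..length x} - {Suc p, Suc (Suc p)}"
  shows "ent (bvec (x[p := v])) k = ent (bvec x) k"
proof (cases "k = 1")
  case True
  with assms have "x \<noteq> []"
    by auto
  with True show ?thesis
    using ent_bvec_1 by simp
next
  case False
  then obtain m where "k = Suc m" "1 \<le> m"
    using assms(2) by (cases k) auto
  with assms show ?thesis
    by (auto simp: ent_bvec_Suc ent_list_update)
qed

lemma ent_bvec_update_flip:
  assumes "Suc p < length x"
    and "ent (bvec (x[p := v])) (Suc p) \<noteq> ent (bvec x) (Suc p)"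
    and "ent (bvec (x[p := v])) (Suc (Suc p)) \<noteq> ent (bvec x) (Suc (Suc p))"
  shows "(ent (bvec x) (Suc p) = 1 \<and> ent (bvec x) (Suc (Suc p)) = 0 \<and>
          ent (bvec (x[p := v])) (Suc p) = 0 \<and> ent (bvec (x[p := v])) (Suc (Suc p)) = 1) \<or>
         (ent (bvec x) (Suc p) = 0 \<and> ent (bvec x) (Suc (Suc p)) = 1 \<and>
          ent (bvec (x[p := v])) (Suc p) = 1 \<and> ent (bvec (x[p := v])) (Suc (Suc p)) = 0)"
proof -
  from assms(1) have "x \<noteq> []" "x[p := v] \<noteq> []"
    by auto
  with assms(2) have "1 \<le> p"
    using ent_bvec_1 by (cases p) auto
  with assms show ?thesis
    using less_double_flip[of "ent x p" v "ent x (Suc p)" "ent x (Suc (Suc p))"]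
    by (auto simp: ent_bvec_Suc ent_list_update split: if_splits)
qed

lemma differ_within_pair_cases:
  fixes n i :: nat
  assumes "\<forall>k\<in>{1..n} - {i, i + 1}. f k = g k"
  shows "(i < n \<and> f i \<noteq> g i \<and> f (i + 1) \<noteq> g (i + 1))
    \<or> (\<exists>j\<in>{i, i + 1}. j \<le> n \<and> (\<forall>k\<in>{1..n}. f k \<noteq> g k \<longleftrightarrow> k = j))
    \<or> (\<forall>k\<in>{1..n}. f k = g k)"
proof -
  define D where "D = {k \<in> {1..n}. f k \<noteq> g k}"
  have "D \<subseteq> {i, i + 1}"
    using assms by (auto simp: D_def)
  then consider "D = {}" | j where "j \<in> {i, i + 1}" "D = {j}" | "D = {i, i + 1}"
    by (cases "i \<in> D"; cases "i + 1 \<in> D") blast+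
  then show ?thesis
  proof cases
    case 1
    then show ?thesis
      by (auto simp: D_def)
  next
    case (2 j)
    from \<open>D = {j}\<close> have "j \<in> D" and "\<forall>k\<in>{1..n}. f k \<noteq> g k \<longleftrightarrow> k = j"
      unfolding D_def by blast+
    with 2 show ?thesis
      by (auto simp: D_def)
  next
    case 3
    then have "i \<in> D" "i + 1 \<in> D"
      by auto
    then have "i < n \<and> f i \<noteq> g i \<and> f (i + 1) \<noteq> g (i + 1)"
      by (auto simp: D_def)
    then show ?thesis ..
  qed
qed

lemma bvec_update_cases:
  fixes v :: int
  assumes "1 \<le> i" "i \<le> length x"
  defines "y \<equiv> x[i - 1 := v]"
  shows "(i < length x \<and>
            ((ent (bvec x) i = 1 \<and> ent (bvec x) (i + 1) = 0 \<and>
              ent (bvec y) i = 0 \<and> ent (bvec y) (i + 1) = 1) \<or>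
             (ent (bvec x) i = 0 \<and> ent (bvec x) (i + 1) = 1 \<and>
              ent (bvec y) i = 1 \<and> ent (bvec y) (i + 1) = 0)) \<and>
            (\<forall>k\<in>{1..length x} - {i, i + 1}. ent (bvec y) k = ent (bvec x) k))
       \<or> (\<exists>j\<in>{i, i + 1}. j \<le> length x \<and>
            (\<forall>k\<in>{1..length x}. ent (bvec y) k \<noteq> ent (bvec x) k \<longleftrightarrow> k = j))
       \<or> bvec y = bvec x"
proof -
  obtain p where i: "i = Suc p"
    using assms(1) by (cases i) auto
  have other: "\<forall>k\<in>{1..length x} - {i, i + 1}. ent (bvec y) k = ent (bvec x) k"
    using assms ent_bvec_update_other unfolding i y_def by auto
  from differ_within_pair_cases[OF other] consider
      (both) "i < length x" "ent (bvec y) i \<noteq> ent (bvec x) i"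
        "ent (bvec y) (i + 1) \<noteq> ent (bvec x) (i + 1)"
    | (single) "\<exists>j\<in>{i, i + 1}. j \<le> length x \<and>
        (\<forall>k\<in>{1..length x}. ent (bvec y) k \<noteq> ent (bvec x) k \<longleftrightarrow> k = j)"
    | (none) "\<forall>k\<in>{1..length x}. ent (bvec y) k = ent (bvec x) k"
    by blast
  then show ?thesis
  proof cases
    case both
    then have "(ent (bvec x) i = 1 \<and> ent (bvec x) (i + 1) = 0 \<and>
                ent (bvec y) i = 0 \<and> ent (bvec y) (i + 1) = 1) \<or>
               (ent (bvec x) i = 0 \<and> ent (bvec x) (i + 1) = 1 \<and>
                ent (bvec y) i = 1 \<and> ent (bvec y) (i + 1) = 0)"
      using ent_bvec_update_flip[of p x v] unfolding i y_def by simp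
    with both(1) other show ?thesis
      by blast
  next
    case none
    then have "bvec y = bvec x"
      using list_eq_iff_ent[of "bvec y" "bvec x"] by (simp add: y_def)
    then show ?thesis
      by blast
  qed blast
qed

theorem proposition1:
  fixes x :: "int list" and n i :: nat and v :: int
  assumes "n \<ge> 2" and "length x = n" and "1 \<le> i" and "i \<le> n"
  shows "(bvec (del_ent x i) = del_ent (bvec x) i \<or>
          (i < n \<and> bvec (del_ent x i) = del_ent (bvec x) (i + 1)))
     \<and> (v \<noteq> ent x i \<longrightarrow>
         (let y = x[i - 1 := v] in
           (i < n \<and>
              ((ent (bvec x) i = 1 \<and> ent (bvec x) (i + 1) = 0 \<and>
                ent (bvec y) i = 0 \<and> ent (bvec y) (i + 1) = 1) \<or>
               (ent (bvec x) i = 0 \<and> ent (bvec x) (i + 1) = 1 \<and>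
                ent (bvec y) i = 1 \<and> ent (bvec y) (i + 1) = 0)) \<and>
              (\<forall>k\<in>{1..n} - {i, i + 1}. ent (bvec y) k = ent (bvec x) k))
         \<or> (\<exists>j\<in>{i, i + 1}. j \<le> n \<and>
              (\<forall>k\<in>{1..n}. ent (bvec y) k \<noteq> ent (bvec x) k \<longleftrightarrow> k = j))
         \<or> bvec y = bvec x))"
proof -
  from assms have i: "1 \<le> i" "i \<le> length x"
    by simp_all
  show ?thesis
    using bvec_del_ent[OF i] bvec_update_cases[OF i, of v]
    unfolding Let_def assms(2)[symmetric] by blast
qed

end
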